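(* Fix an integer $i\ge1$ and let $p_i(r)=\lim_{n\to\infty}\Pr(T^{(n)}_{1,i}=r)$, where $T^{(n)}$ is a uniformly random standard Young tableau of shape $(n,n)$. Then the variance of the probability distribution $p_i$ is $$-\frac{4\cdot 16^{-i}\,\big((2i+1)!\big)^2}{(i!)^4}-\frac{2\cdot 4^{-i}\,(2i+1)!}{(i!)^2}+6i+6.$$
   Context: A standard Young tableau of shape $(n,n)$ is a bijective filling $T$ of the cells $[a,b]$, $a\in\{1,2\}$, $1\le b\le n$, by $\{1,\dots,2n\}$ that increases along rows and down columns; $T_{1,i}$ denotes the entry in row 1, column $i$. The limits $p_i(r)$ exist and form a probability distribution on $\{i,\dots,2i-1\}$. *)

theory Defs
  imports Complex_Main
begin

text \<open>A filling is T :: nat => nat => nat, T a b = entry in row a, column b;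
  it is required to be 0 outside the cells (so the set of tableaux is finite).\<close>

definition cells :: "nat \<Rightarrow> (nat \<times> nat) set" where
  "cells n = {1,2} \<times> {1..n}"

definition is_syt :: "nat \<Rightarrow> (nat \<Rightarrow> nat \<Rightarrow> nat) \<Rightarrow> bool" where
  "is_syt n T \<longleftrightarrow>
     bij_betw (\<lambda>(a,b). T a b) (cells n) {1..2*n}
   \<and> (\<forall>a b. (a,b) \<notin> cells n \<longrightarrow> T a b = 0)
   \<and> (\<forall>a b. (a,b) \<in> cells n \<longrightarrow> (a, Suc b) \<in> cells n \<longrightarrow> T a b < T a (Suc b))
   \<and> (\<forall>b. (1,b) \<in> cells n \<longrightarrow> (2,b) \<in> cells n \<longrightarrow> T 1 b < T 2 b)"

definition syt :: "nat \<Rightarrow> (nat \<Rightarrow> nat \<Rightarrow> nat) set" where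
  "syt n = {T. is_syt n T}"

definition syt_prob :: "nat \<Rightarrow> nat \<Rightarrow> nat \<Rightarrow> real" where
  "syt_prob n i r = real (card {T \<in> syt n. T 1 i = r}) / real (card (syt n))"

definition p_lim :: "nat \<Rightarrow> nat \<Rightarrow> real" where
  "p_lim i r = lim (\<lambda>n. syt_prob n i r)"

definition dist_mean :: "(nat \<Rightarrow> real) \<Rightarrow> nat set \<Rightarrow> real" where
  "dist_mean p S = (\<Sum>r\<in>S. real r * p r)"

definition dist_variance :: "(nat \<Rightarrow> real) \<Rightarrow> nat set \<Rightarrow> real" where
  "dist_variance p S = (\<Sum>r\<in>S. (real r - dist_mean p S)^2 * p r)"

end

theory Submission
  imports Defs "HOL-Real_Asymp.Real_Asymp"
begin

text \<open>Recording for each of \<open>1, \<dots>, 2n\<close> whether it lies in the first row turns a standard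
  Young tableau of shape \<open>(n,n)\<close> into a ballot (Dyck) word, bijectively.  The entry
  \<open>T\<^sub>1\<^sub>,\<^sub>i\<close> equals \<open>r\<close> iff letter \<open>r\<close> is the \<open>i\<close>-th up-step, so cutting the word there
  factors the count into two ballot numbers, both given by the reflection principle.  Letting
  \<open>n \<rightarrow> \<infinity>\<close> yields \<open>p\<^sub>i (i + k) = 2\<^sup>-\<^sup>i w\<^sub>i(k)\<close> with an explicit hypergeometric weight \<open>w\<^sub>i\<close>,
  and the sums \<open>\<Sum> k w\<^sub>i(k)\<close> and \<open>\<Sum> k\<^sup>2 w\<^sub>i(k)\<close> are Gosper-summable in closed form, which
  gives the mean and the variance.\<close>

section \<open>Ballot words\<close>

definition ups :: "bool list \<Rightarrow> nat" where
  "ups w = length (filter id w)"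

definition downs :: "bool list \<Rightarrow> nat" where
  "downs w = length (filter Not w)"

lemma ups_simps [simp]:
  "ups [] = 0" "ups (True # w) = Suc (ups w)" "ups (False # w) = ups w"
  "ups (v @ w) = ups v + ups w"
  by (auto simp: ups_def)

lemma downs_simps [simp]:
  "downs [] = 0" "downs (True # w) = downs w" "downs (False # w) = Suc (downs w)"
  "downs (v @ w) = downs v + downs w"
  by (auto simp: downs_def)

lemma ups_add_downs: "ups w + downs w = length w"
  by (induction w) (simp_all add: ups_def downs_def)

text \<open>\<open>True\<close> is an up-step; \<open>ballot h w\<close> says that the lattice path \<open>w\<close> started at
  height \<open>h\<close> never goes below height 0.\<close>

fun ballot :: "nat \<Rightarrow> bool list \<Rightarrow> bool" where
  "ballot h [] = True"
| "ballot h (True # w) = ballot (Suc h) w"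
| "ballot h (False # w) = (0 < h \<and> ballot (h - 1) w)"

lemma ballot_append: "ballot h (v @ w) \<longleftrightarrow> ballot h v \<and> ballot (h + ups v - downs v) w"
proof (induction v arbitrary: h)
  case (Cons x v)
  then show ?case by (cases x; cases h) auto
qed simp

lemma ballot_iff_prefixes:
  "ballot h w \<longleftrightarrow> (\<forall>k\<le>length w. downs (take k w) \<le> h + ups (take k w))"
proof (induction w arbitrary: h)
  case (Cons x w)
  have all_Suc: "(\<forall>k\<le>Suc m. P k) \<longleftrightarrow> P 0 \<and> (\<forall>k\<le>m. P (Suc k))" for P m
    by (metis Suc_le_mono le0 not0_implies_Suc)
  show ?case
    using Cons[of "Suc h"] Cons[of "h - 1"] by (cases x; cases h) (auto simp: all_Suc)
qed simp

definition ballot_words :: "nat \<Rightarrow> nat \<Rightarrow> nat \<Rightarrow> bool list set" where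
  "ballot_words h a b = {w. ups w = a \<and> downs w = b \<and> ballot h w}"

lemma length_ballot_words: "w \<in> ballot_words h a b \<Longrightarrow> length w = a + b"
  using ups_add_downs[of w] by (simp add: ballot_words_def)

lemma finite_ballot_words: "finite (ballot_words h a b)"
proof (rule finite_subset)
  show "ballot_words h a b \<subseteq> {w. set w \<subseteq> UNIV \<and> length w = a + b}"
    using length_ballot_words by auto
qed (rule finite_lists_length_eq[OF finite])

lemma ballot_words_eq_Cons:
  assumes "0 < a + b"
  shows "ballot_words h a b =
      (if 0 < a then Cons True ` ballot_words (Suc h) (a - 1) b else {})
    \<union> (if 0 < h \<and> 0 < b then Cons False ` ballot_words (h - 1) a (b - 1) else {})"
proof (rule set_eqI)
  fix w
  show "w \<in> ballot_words h a b \<longleftrightarrow> w \<in>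
      (if 0 < a then Cons True ` ballot_words (Suc h) (a - 1) b else {})
    \<union> (if 0 < h \<and> 0 < b then Cons False ` ballot_words (h - 1) a (b - 1) else {})"
  proof (cases w)
    case (Cons x v)
    then show ?thesis by (cases x) (auto simp: ballot_words_def)
  qed (use assms in \<open>auto simp: ballot_words_def\<close>)
qed

text \<open>The reflection principle: all words with \<open>a\<close> ups and \<open>b\<close> downs minus the reflected bad ones.\<close>

definition ballot_number :: "nat \<Rightarrow> nat \<Rightarrow> nat \<Rightarrow> int" where
  "ballot_number h a b =
     int ((a + b) choose b) - (if h + 1 \<le> b then int ((a + b) choose (b - h - 1)) else 0)"

lemma ballot_number_rec:
  assumes "0 < a + b" "b \<le> a + h"
  shows "ballot_number h a b =
      (if 0 < a then ballot_number (Suc h) (a - 1) b else 0)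
    + (if 0 < h \<and> 0 < b then ballot_number (h - 1) a (b - 1) else 0)"
proof -
  consider "a = 0" | "0 < a" "b = 0" | "0 < a" "0 < b" by blast
  then show ?thesis
  proof cases
    case 1
    then show ?thesis using assms by (auto simp: ballot_number_def)
  next
    case 2
    then show ?thesis by (simp add: ballot_number_def)
  next
    case 3
    then obtain a' b' where ab: "a = Suc a'" "b = Suc b'" by (metis gr0_implies_Suc)
    define m where "m = a' + b"
    have pascal: "int (Suc m choose Suc k) = int (m choose k) + int (m choose Suc k)" for k
      by simp
    have lengths: "a + b = Suc m" "a' + b = m" "a + b' = m" using ab by (auto simp: m_def)
    show ?thesis
    proof (cases h)
      case 0
      then show ?thesis using ab pascal[of b'] pascal[of "b' - 1"]
        by (cases b') (simp_all add: ballot_number_def lengths)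
    next
      case (Suc h')
      consider "b' \<le> Suc h'" | "Suc h' < b'" by linarith
      then show ?thesis
      proof cases
        case 1
        then show ?thesis using ab Suc by (auto simp: ballot_number_def lengths le_Suc_eq)
      next
        case 2
        define c where "c = b' - h' - 2"
        have c: "b' - h' - 1 = Suc c" "b' - Suc h' = Suc c" using 2 by (simp_all add: c_def)
        show ?thesis using ab Suc 2 pascal[of b'] pascal[of c]
          by (simp add: ballot_number_def lengths c c_def)
      qed
    qed
  qed
qed

lemma card_ballot_words: "b \<le> a + h \<Longrightarrow> int (card (ballot_words h a b)) = ballot_number h a b"
proof (induction "a + b" arbitrary: h a b)
  case 0
  then have "ballot_words h a b = {[]}"
    by (auto simp: ballot_words_def) (metis ups_add_downs add_0 length_0_conv)
  then show ?case using 0 by (simp add: ballot_number_def)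
next
  case (Suc m)
  have pos: "0 < a + b" using Suc.hyps(2) by linarith
  have up: "int (card (if 0 < a then Cons True ` ballot_words (Suc h) (a - 1) b else {}))
      = (if 0 < a then ballot_number (Suc h) (a - 1) b else 0)"
    using Suc by (simp add: card_image)
  have down: "int (card (if 0 < h \<and> 0 < b then Cons False ` ballot_words (h - 1) a (b - 1) else {}))
      = (if 0 < h \<and> 0 < b then ballot_number (h - 1) a (b - 1) else 0)"
    using Suc by (simp add: card_image)
  have "int (card (ballot_words h a b))
      = int (card (if 0 < a then Cons True ` ballot_words (Suc h) (a - 1) b else {}))
      + int (card (if 0 < h \<and> 0 < b then Cons False ` ballot_words (h - 1) a (b - 1) else {}))"
    unfolding ballot_words_eq_Cons[OF pos] by (subst card_Un_disjoint) (auto simp: finite_ballot_words)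
  then show ?case using up down ballot_number_rec[OF pos Suc.prems] by simp
qed

lemma card_ballot_words_tight:
  assumes "1 \<le> a"
  shows "real (card (ballot_words h a (a + h)))
    = (real h + 1) * fact (2*a + h) / (fact a * fact (a + h + 1))"
proof -
  obtain a' where a': "a = Suc a'" using assms by (cases a) auto
  have "int (card (ballot_words h a (a + h))) = int ((2*a + h) choose (a + h)) - int ((2*a + h) choose a')"
    using card_ballot_words[of "a + h" a h] a'
    by (simp add: ballot_number_def mult_2 add_ac del: binomial_Suc_Suc)
  then have "real (card (ballot_words h a (a + h)))
      = real ((2*a + h) choose (a + h)) - real ((2*a + h) choose a')"
    by (metis of_int_diff of_int_of_nat_eq)
  also have "\<dots> = fact (2*a + h) / (fact (a + h) * fact a) - fact (2*a + h) / (fact a' * fact (a + h + 1))"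
  proof -
    have "2*a + h - (a + h) = a" "2*a + h - a' = a + h + 1" "a' \<le> 2*a + h" using a' by simp_all
    then show ?thesis
      using binomial_fact[of "a + h" "2*a + h", where 'a=real] binomial_fact[of a' "2*a + h", where 'a=real]
      by (simp add: mult.commute del: binomial_Suc_Suc)
  qed
  also have "\<dots> = (real h + 1) * fact (2*a + h) / (fact a * fact (a + h + 1))"
  proof -
    have fact_a: "(fact a :: real) = real a * fact a'" using a' by simp
    have fact_ah: "(fact (a + h + 1) :: real) = real (a + h + 1) * fact (a + h)" by simp
    have "X / (Y * (A * Z)) - X / (Z * (B * Y)) = (B - A) * X / ((A * Z) * (B * Y))"
      if "A > 0" "B > 0" "Y > 0" "Z > 0" for X Y Z A B :: real
      using that by (simp add: field_simps)
    moreover have "real (a + h + 1) - real a = real h + 1" by simp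
    ultimately show ?thesis unfolding fact_a fact_ah using a' by simp
  qed
  finally show ?thesis .
qed

lemma card_ballot_words_from_zero:
  assumes "1 \<le> i" "k < i"
  shows "real (card (ballot_words 0 (i - 1) k))
    = (real i - real k) / (real i + real k) * (fact (i + k) / (fact k * fact i))"
proof -
  obtain j where j: "i = Suc j" using assms by (cases i) auto
  have count: "int (card (ballot_words 0 j k)) = ballot_number 0 j k"
    by (rule card_ballot_words) (use assms j in simp)
  show ?thesis
  proof (cases k)
    case 0
    then show ?thesis using count j by (simp add: ballot_number_def)
  next
    case (Suc k')
    define m where "m = j + k"
    have "ballot_number 0 j k = int (m choose k) - int (m choose k')"
      unfolding ballot_number_def m_def using Suc by (simp del: binomial_Suc_Suc)
    then have "real (card (ballot_words 0 j k)) = real (m choose k) - real (m choose k')"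
      using count by (metis of_int_diff of_int_of_nat_eq)
    moreover have "m - k = j" "m - k' = i" "k \<le> m" "k' \<le> m" using Suc j by (auto simp: m_def)
    then have "real (m choose k) = fact m / (fact k * fact j)" "real (m choose k') = fact m / (fact k' * fact i)"
      using binomial_fact[of k m, where 'a=real] binomial_fact[of k' m, where 'a=real] by simp_all
    moreover have "(fact k :: real) = real k * fact k'" "(fact i :: real) = real i * fact j"
      "(fact (i + k) :: real) = (real i + real k) * fact m"
      using Suc j by (simp_all add: m_def)
    moreover have "X / (K * Z * Y) - X / (Z * (I * Y)) = (I - K) / (I + K) * ((I + K) * X / (K * Z * (I * Y)))"
      if "K > 0" "I > 0" "Z > 0" "Y > 0" for X Y Z K I :: real
    proof -
      have "X / (K * Z * Y) - X / (Z * (I * Y)) = (I - K) * (X / (K * Z * (I * Y)))"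
        using that by (simp add: field_simps)
      then show ?thesis using that by simp
    qed
    ultimately show ?thesis using Suc j by simp
  qed
qed

section \<open>Indicator words and sorted lists\<close>

lemma card_Suc_preimage: "card {j. j < L \<and> P (Suc j)} = card {k \<in> {1..L}. P k}"
proof -
  have "{k \<in> {1..L}. P k} = Suc ` {j. j < L \<and> P (Suc j)}"
    by (auto simp: image_iff dest: Suc_le_D)
  then show ?thesis by (simp add: card_image)
qed

definition indicator_word :: "nat \<Rightarrow> nat set \<Rightarrow> bool list" where
  "indicator_word L U = map (\<lambda>j. Suc j \<in> U) [0..<L]"

definition true_positions :: "nat \<Rightarrow> bool list \<Rightarrow> nat set" where
  "true_positions L w = {k \<in> {1..L}. w ! (k - 1)}"

lemma length_indicator_word [simp]: "length (indicator_word L U) = L"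
  by (simp add: indicator_word_def)

lemma nth_indicator_word: "r \<in> {1..L} \<Longrightarrow> indicator_word L U ! (r - 1) \<longleftrightarrow> r \<in> U"
  by (auto simp: indicator_word_def nth_map[of "r - 1"])

lemma take_indicator_word: "k \<le> L \<Longrightarrow> take k (indicator_word L U) = indicator_word k U"
  by (simp add: indicator_word_def take_map)

lemma length_filter_indicator_word:
  "length (filter Q (indicator_word L U)) = card {k \<in> {1..L}. Q (k \<in> U)}"
proof -
  have "length (filter Q (indicator_word L U)) = card {j. j < L \<and> Q (Suc j \<in> U)}"
    by (simp add: indicator_word_def filter_map comp_def distinct_length_filter Int_def conj_commute)
  then show ?thesis using card_Suc_preimage[of L "\<lambda>k. Q (k \<in> U)"] by simp
qed

lemma ups_indicator_word: "ups (indicator_word L U) = card (U \<inter> {1..L})"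
  unfolding ups_def length_filter_indicator_word by (auto intro: arg_cong[where f=card])

lemma downs_indicator_word: "downs (indicator_word L U) = card ({1..L} - U)"
  unfolding downs_def length_filter_indicator_word by (auto intro: arg_cong[where f=card])

lemma indicator_word_true_positions: "length w = L \<Longrightarrow> indicator_word L (true_positions L w) = w"
  by (intro nth_equalityI) (auto simp: indicator_word_def true_positions_def)

lemma true_positions_indicator_word: "U \<subseteq> {1..L} \<Longrightarrow> true_positions L (indicator_word L U) = U"
  using nth_indicator_word[of _ L U] by (auto simp: true_positions_def)

lemma atLeastAtMost_1_eq_image_Suc: "{1..n} = Suc ` {0..<n}"
  by (simp add: atLeastLessThanSuc_atLeastAtMost)

lemma sorted_list_of_set_image_interval:
  assumes "\<And>b b'. b \<in> {1..n} \<Longrightarrow> b' \<in> {1..n} \<Longrightarrow> b < b' \<Longrightarrow> f b < f b'"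
  shows "sorted_list_of_set (f ` {1..n}) = map (\<lambda>j. f (Suc j)) [0..<n]"
proof -
  have "sorted_wrt (<) (map (\<lambda>j. f (Suc j)) [0..<n])"
    unfolding sorted_wrt_iff_nth_less using assms by auto
  moreover have "set (map (\<lambda>j. f (Suc j)) [0..<n]) = f ` {1..n}"
    unfolding atLeastAtMost_1_eq_image_Suc image_image by simp
  ultimately show ?thesis
    by (metis sorted_list_of_set.idem_if_sorted_distinct sorted_wrt_iff_nth_less strict_sorted_iff)
qed

lemma image_nth_shift: "length xs = n \<Longrightarrow> (\<lambda>b. xs ! (b - 1)) ` {1..n} = set xs"
  unfolding atLeastAtMost_1_eq_image_Suc image_image by (simp add: nth_image)

text \<open>Otherwise the prefix ending at the \<open>j\<close>-th element of the complement contains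
  \<open>j + 1\<close> elements of the complement but at most \<open>j\<close> elements of \<open>U\<close>.\<close>

lemma sorted_list_of_set_nth_less_complement:
  fixes U :: "nat set"
  assumes U: "U \<subseteq> {1..L}"
    and balanced: "\<forall>k\<le>L. card ({1..k} - U) \<le> card (U \<inter> {1..k})"
    and j: "j < length (sorted_list_of_set U)" "j < length (sorted_list_of_set ({1..L} - U))"
  shows "sorted_list_of_set U ! j < sorted_list_of_set ({1..L} - U) ! j"
proof (rule ccontr)
  define u where "u = sorted_list_of_set U"
  define d where "d = sorted_list_of_set ({1..L} - U)"
  have su: "sorted_wrt (<) u" "set u = U"
    using finite_subset[OF U] by (auto simp: u_def)
  have sd: "sorted_wrt (<) d" "set d = {1..L} - U" by (auto simp: d_def)
  define y where "y = d ! j"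
  have y: "y \<in> {1..L} - U" using j(2) sd(2) unfolding y_def d_def[symmetric] by (metis nth_mem)
  assume "\<not> sorted_list_of_set U ! j < sorted_list_of_set ({1..L} - U) ! j"
  then have uy: "y \<le> u ! j" by (simp add: u_def d_def y_def)
  have "j + 1 = card (nth d ` {..j})"
  proof -
    have "inj_on (nth d) {..j}"
      using sd(1) j unfolding d_def[symmetric]
      by (intro inj_onI) (metis atMost_iff le_less_trans nat_neq_iff sorted_wrt_nth_less)
    then show ?thesis by (simp add: card_image)
  qed
  also have "\<dots> \<le> card ({1..y} - U)"
  proof (rule card_mono)
    show "nth d ` {..j} \<subseteq> {1..y} - U"
    proof
      fix x assume "x \<in> nth d ` {..j}"
      then obtain i where i: "i \<le> j" "x = d ! i" by auto
      have "x \<in> set d" unfolding i(2) by (rule nth_mem) (use i j(2) in \<open>simp add: d_def\<close>)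
      moreover have "x \<le> y" using i sd(1) j unfolding y_def d_def[symmetric]
        by (metis order.order_iff_strict sorted_wrt_nth_less)
      ultimately show "x \<in> {1..y} - U" using sd by auto
    qed
  qed simp
  also have "\<dots> \<le> card (U \<inter> {1..y})" using balanced y by auto
  also have "\<dots> \<le> card (nth u ` {..<j})"
  proof (rule card_mono)
    show "U \<inter> {1..y} \<subseteq> nth u ` {..<j}"
    proof
      fix x assume x: "x \<in> U \<inter> {1..y}"
      then obtain m where m: "m < length u" "x = u ! m" using su by (metis IntD1 in_set_conv_nth)
      have "m < j"
      proof (rule ccontr)
        assume "\<not> m < j"
        then have "u ! j \<le> u ! m" using su(1) m(1)
          by (metis linorder_not_less order.order_iff_strict sorted_wrt_nth_less)
        then have "x = y" using x m uy by auto
        then show False using x y by auto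
      qed
      then show "x \<in> nth u ` {..<j}" using m by auto
    qed
  qed simp
  also have "\<dots> \<le> j" using card_image_le[of "{..<j}" "nth u"] by simp
  finally show False by simp
qed

section \<open>Standard Young tableaux of shape (n,n) as ballot words\<close>

lemma syt_row_less:
  assumes "is_syt n T" "a \<in> {1,2}" "1 \<le> b" "b < b'" "b' \<le> n"
  shows "T a b < T a b'"
proof -
  have "b + Suc d \<le> n \<longrightarrow> T a b < T a (b + Suc d)" for d
  proof (induction d)
    case 0
    then show ?case using assms(1-3) by (auto simp: is_syt_def cells_def)
  next
    case (Suc d)
    have "b + Suc (Suc d) \<le> n \<longrightarrow> T a (b + Suc d) < T a (Suc (b + Suc d))"
      using assms(1-3) by (auto simp: is_syt_def cells_def)
    then show ?case using Suc by auto
  qed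
  from this[of "b' - b - 1"] show ?thesis using assms(4,5) by simp
qed

lemma syt_row_less_iff:
  assumes "is_syt n T" "a \<in> {1,2}" "b \<in> {1..n}" "b' \<in> {1..n}"
  shows "T a b < T a b' \<longleftrightarrow> b < b'"
  using syt_row_less[OF assms(1,2)] assms(3,4)
  by (metis atLeastAtMost_iff linorder_neqE_nat not_less_iff_gr_or_eq)

lemma syt_row_inj: "is_syt n T \<Longrightarrow> a \<in> {1,2} \<Longrightarrow> inj_on (T a) {1..n}"
  by (intro inj_onI) (metis syt_row_less_iff nat_neq_iff)

lemma syt_entry_range: "is_syt n T \<Longrightarrow> (a, b) \<in> cells n \<Longrightarrow> T a b \<in> {1..2*n}"
  unfolding is_syt_def bij_betw_def by auto

lemma syt_col_less: "is_syt n T \<Longrightarrow> b \<in> {1..n} \<Longrightarrow> T 1 b < T 2 b"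
  unfolding is_syt_def cells_def by auto

lemma syt_second_row:
  assumes "is_syt n T"
  shows "T 2 ` {1..n} = {1..2*n} - T 1 ` {1..n}"
proof -
  have bij: "bij_betw (\<lambda>(a, b). T a b) (cells n) {1..2*n}"
    using assms by (simp add: is_syt_def)
  have "(\<lambda>(a, b). T a b) ` cells n = T 1 ` {1..n} \<union> T 2 ` {1..n}"
    by (auto simp: cells_def image_iff)
  then have union: "T 1 ` {1..n} \<union> T 2 ` {1..n} = {1..2*n}"
    using bij by (simp add: bij_betw_def)
  have "T 1 b \<noteq> T 2 b'" if "b \<in> {1..n}" "b' \<in> {1..n}" for b b'
    using that inj_onD[OF bij_betw_imp_inj_on[OF bij], of "(1, b)" "(2, b')"] by (auto simp: cells_def)
  then show ?thesis using union by blast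
qed

lemma card_syt_row_le:
  assumes "is_syt n T" "a \<in> {1,2}"
  shows "card (T a ` {1..n} \<inter> {1..k}) = card {b \<in> {1..n}. T a b \<le> k}"
proof -
  have "T a ` {1..n} \<inter> {1..k} = T a ` {b \<in> {1..n}. T a b \<le> k}"
    using syt_entry_range[OF assms(1)] assms(2) by (fastforce simp: cells_def)
  moreover have "inj_on (T a) {b \<in> {1..n}. T a b \<le> k}"
    using syt_row_inj[OF assms] by (rule inj_on_subset) auto
  ultimately show ?thesis by (simp add: card_image)
qed

definition row_word :: "nat \<Rightarrow> (nat \<Rightarrow> nat \<Rightarrow> nat) \<Rightarrow> bool list" where
  "row_word n T = indicator_word (2*n) (T 1 ` {1..n})"

lemma row_word_in_ballot_words:
  assumes T: "is_syt n T"
  shows "row_word n T \<in> ballot_words 0 n n"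
proof -
  define U where "U = T 1 ` {1..n}"
  have U: "U \<subseteq> {1..2*n}" using syt_entry_range[OF T] by (auto simp: U_def cells_def)
  have second_row: "T 2 ` {1..n} = {1..2*n} - U" using syt_second_row[OF T] by (simp add: U_def)
  have "ups (row_word n T) = n"
    using U syt_row_inj[OF T, of 1] by (simp add: row_word_def ups_indicator_word Int_absorb2 card_image U_def)
  moreover have "downs (row_word n T) = n"
  proof -
    have "downs (row_word n T) = card ({1..2*n} - U)"
      by (simp add: row_word_def downs_indicator_word U_def)
    also have "\<dots> = card (T 2 ` {1..n})" by (simp only: second_row)
    finally show ?thesis using syt_row_inj[OF T, of 2] by (simp add: card_image)
  qed
  moreover have "downs (take k (row_word n T)) \<le> ups (take k (row_word n T))" if k: "k \<le> 2*n" for k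
  proof -
    have "{1..k} - U = T 2 ` {1..n} \<inter> {1..k}"
      using k unfolding second_row by auto
    then have "downs (take k (row_word n T)) = card (T 2 ` {1..n} \<inter> {1..k})"
      using k by (simp add: row_word_def take_indicator_word downs_indicator_word U_def)
    also have "\<dots> = card {b \<in> {1..n}. T 2 b \<le> k}" by (rule card_syt_row_le[OF T]) simp
    also have "\<dots> \<le> card {b \<in> {1..n}. T 1 b \<le> k}"
      using syt_col_less[OF T] by (intro card_mono) (auto, fastforce)
    also have "\<dots> = card (T 1 ` {1..n} \<inter> {1..k})" by (rule card_syt_row_le[OF T, symmetric]) simp
    also have "\<dots> = ups (take k (row_word n T))"
      using k by (simp add: row_word_def take_indicator_word ups_indicator_word)
    finally show ?thesis .
  qed
  ultimately show ?thesis
    by (auto simp: ballot_words_def ballot_iff_prefixes row_word_def)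
qed

definition tableau_of_set :: "nat \<Rightarrow> nat set \<Rightarrow> nat \<Rightarrow> nat \<Rightarrow> nat" where
  "tableau_of_set n U a b = (if (a, b) \<in> cells n
     then sorted_list_of_set (if a = 1 then U else {1..2*n} - U) ! (b - 1) else 0)"

lemma tableau_of_set_first_row:
  assumes T: "is_syt n T"
  shows "tableau_of_set n (T 1 ` {1..n}) = T"
proof (intro ext)
  fix a b
  have sorted_row: "sorted_list_of_set (T a ` {1..n}) = map (\<lambda>j. T a (Suc j)) [0..<n]" if "a \<in> {1,2}" for a
    by (rule sorted_list_of_set_image_interval) (use syt_row_less_iff[OF T that] in auto)
  show "tableau_of_set n (T 1 ` {1..n}) a b = T a b"
  proof (cases "(a, b) \<in> cells n")
    case True
    then have "a = 1 \<or> a = 2" "1 \<le> b" "b \<le> n" by (auto simp: cells_def)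
    then show ?thesis
      using sorted_row[of a] True
      unfolding tableau_of_set_def syt_second_row[OF T, symmetric] by auto
  next
    case False
    then show ?thesis using T by (simp add: tableau_of_set_def is_syt_def)
  qed
qed

lemma tableau_of_set_rows:
  assumes U: "U \<subseteq> {1..2*n}" "card U = n"
  defines "T \<equiv> tableau_of_set n U"
  shows "b \<in> {1..n} \<Longrightarrow> T 1 b = sorted_list_of_set U ! (b - 1)"
    and "b \<in> {1..n} \<Longrightarrow> T 2 b = sorted_list_of_set ({1..2*n} - U) ! (b - 1)"
    and "T 1 ` {1..n} = U"
    and "T 2 ` {1..n} = {1..2*n} - U"
proof -
  show row1: "T 1 b = sorted_list_of_set U ! (b - 1)"
    and row2: "T 2 b = sorted_list_of_set ({1..2*n} - U) ! (b - 1)" if "b \<in> {1..n}" for b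
    using that by (simp_all add: T_def tableau_of_set_def cells_def)
  have "finite U" using U(1) finite_subset by blast
  have "T 1 ` {1..n} = (\<lambda>b. sorted_list_of_set U ! (b - 1)) ` {1..n}"
    using row1 by (rule image_cong[OF refl])
  also have "\<dots> = U" using image_nth_shift[of "sorted_list_of_set U" n] \<open>finite U\<close> U(2) by simp
  finally show "T 1 ` {1..n} = U" .
  have "card ({1..2*n} - U) = n" using U by (simp add: card_Diff_subset finite_subset)
  have "T 2 ` {1..n} = (\<lambda>b. sorted_list_of_set ({1..2*n} - U) ! (b - 1)) ` {1..n}"
    using row2 by (rule image_cong[OF refl])
  also have "\<dots> = {1..2*n} - U"
    using image_nth_shift[of "sorted_list_of_set ({1..2*n} - U)" n] \<open>card ({1..2*n} - U) = n\<close> by simp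
  finally show "T 2 ` {1..n} = {1..2*n} - U" .
qed

lemma syt_tableau_of_set:
  assumes U: "U \<subseteq> {1..2*n}" "card U = n"
    and balanced: "\<forall>k\<le>2*n. card ({1..k} - U) \<le> card (U \<inter> {1..k})"
  shows "is_syt n (tableau_of_set n U)"
proof -
  define T where "T = tableau_of_set n U"
  define u where "u = sorted_list_of_set U"
  define d where "d = sorted_list_of_set ({1..2*n} - U)"
  note rows = tableau_of_set_rows[OF U, folded T_def u_def d_def]
  have "finite U" using U(1) finite_subset by blast
  then have su: "sorted_wrt (<) u" "length u = n" using U by (auto simp: u_def)
  have "card ({1..2*n} - U) = n" using U by (simp add: card_Diff_subset finite_subset)
  then have sd: "sorted_wrt (<) d" "length d = n" by (auto simp: d_def)
  have "(\<lambda>(a, b). T a b) ` cells n = T 1 ` {1..n} \<union> T 2 ` {1..n}"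
    by (auto simp: cells_def image_iff)
  then have image: "(\<lambda>(a, b). T a b) ` cells n = {1..2*n}" using rows(3,4) U(1) by auto
  have "bij_betw (\<lambda>(a, b). T a b) (cells n) {1..2*n}"
  proof -
    have "card (cells n) = 2 * n" by (simp add: cells_def card_cartesian_product)
    then have "inj_on (\<lambda>(a, b). T a b) (cells n)"
      by (intro eq_card_imp_inj_on) (simp_all only: image, auto simp: cells_def)
    then show ?thesis using image by (simp add: bij_betw_def)
  qed
  moreover have "\<forall>a b. (a, b) \<notin> cells n \<longrightarrow> T a b = 0" by (simp add: T_def tableau_of_set_def)
  moreover have "T a b < T a (Suc b)" if "(a, b) \<in> cells n" "(a, Suc b) \<in> cells n" for a b
  proof -
    have b: "1 \<le> b" "Suc b \<le> n" and "a = 1 \<or> a = 2" using that by (auto simp: cells_def)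
    then show ?thesis
      using rows(1,2) sorted_wrt_nth_less[OF su(1), of "b - 1" b] sorted_wrt_nth_less[OF sd(1), of "b - 1" b]
      su(2) sd(2) by auto
  qed
  moreover have "T 1 b < T 2 b" if "b \<in> {1..n}" for b
  proof -
    have "u ! (b - 1) < d ! (b - 1)"
      unfolding u_def d_def
      by (rule sorted_list_of_set_nth_less_complement[OF U(1) balanced])
         (use that su(2) sd(2) in \<open>auto simp: u_def d_def\<close>)
    then show ?thesis using rows(1,2) that by simp
  qed
  ultimately show ?thesis unfolding is_syt_def T_def[symmetric] by (auto simp: cells_def)
qed

lemma syt_tableau_of_ballot_word:
  assumes w: "w \<in> ballot_words 0 n n"
  defines "T \<equiv> tableau_of_set n (true_positions (2*n) w)"
  shows "is_syt n T" "row_word n T = w"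
proof -
  define U where "U = true_positions (2*n) w"
  have U: "U \<subseteq> {1..2*n}" by (auto simp: U_def true_positions_def)
  have w_eq: "w = indicator_word (2*n) U"
    using length_ballot_words[OF w] by (simp add: U_def indicator_word_true_positions)
  have "card U = n"
    using w U by (simp add: ballot_words_def w_eq ups_indicator_word Int_absorb2)
  moreover have "\<forall>k\<le>2*n. card ({1..k} - U) \<le> card (U \<inter> {1..k})"
    using w by (simp add: ballot_words_def ballot_iff_prefixes w_eq take_indicator_word
        ups_indicator_word downs_indicator_word)
  moreover have "T = tableau_of_set n U" by (simp add: T_def U_def)
  ultimately show "is_syt n T" "row_word n T = w"
    using syt_tableau_of_set[OF U] tableau_of_set_rows(3)[OF U] by (simp_all add: row_word_def w_eq)
qed

lemma bij_row_word: "bij_betw (row_word n) (syt n) (ballot_words 0 n n)"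
proof (rule bij_betw_byWitness[where f'="\<lambda>w. tableau_of_set n (true_positions (2*n) w)"])
  have "true_positions (2*n) (row_word n T) = T 1 ` {1..n}" if "is_syt n T" for T
    using syt_entry_range[OF that] unfolding row_word_def
    by (intro true_positions_indicator_word) (auto simp: cells_def)
  then show "\<forall>T\<in>syt n. tableau_of_set n (true_positions (2*n) (row_word n T)) = T"
    using tableau_of_set_first_row by (simp add: syt_def)
  show "row_word n ` syt n \<subseteq> ballot_words 0 n n"
    using row_word_in_ballot_words by (auto simp: syt_def)
  show "\<forall>w\<in>ballot_words 0 n n. row_word n (tableau_of_set n (true_positions (2*n) w)) = w"
    and "(\<lambda>w. tableau_of_set n (true_positions (2*n) w)) ` ballot_words 0 n n \<subseteq> syt n"
    using syt_tableau_of_ballot_word by (auto simp: syt_def)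
qed

lemma card_syt: "card (syt n) = card (ballot_words 0 n n)"
  by (rule bij_betw_same_card[OF bij_row_word])

section \<open>The distribution of the entry \<open>T\<^sub>1\<^sub>,\<^sub>i\<close>\<close>

lemma card_first_row_below:
  assumes T: "is_syt n T" and b: "b \<in> {1..n}"
  shows "card (T 1 ` {1..n} \<inter> {1..T 1 b - 1}) = b - 1"
proof -
  have "1 \<le> T 1 b" using syt_entry_range[OF T, of 1 b] b by (simp add: cells_def)
  then have "T 1 b' \<le> T 1 b - 1 \<longleftrightarrow> b' < b" if "b' \<in> {1..n}" for b'
    using syt_row_less_iff[OF T _ that b, of 1] by auto
  then have "{b' \<in> {1..n}. T 1 b' \<le> T 1 b - 1} = {b' \<in> {1..n}. b' < b}" by blast
  also have "\<dots> = {1..b - 1}" using b by auto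
  finally have "{b' \<in> {1..n}. T 1 b' \<le> T 1 b - 1} = {1..b - 1}" .
  then show ?thesis using card_syt_row_le[OF T, of 1 "T 1 b - 1"] by simp
qed

lemma syt_first_row_entry_eq_iff:
  assumes T: "is_syt n T" and i: "i \<in> {1..n}"
  shows "T 1 i = r \<longleftrightarrow>
    r \<in> {1..2*n} \<and> row_word n T ! (r - 1) \<and> ups (take (r - 1) (row_word n T)) = i - 1"
proof -
  define U where "U = T 1 ` {1..n}"
  have word: "row_word n T = indicator_word (2*n) U" by (simp add: row_word_def U_def)
  have ups_prefix: "ups (take (r - 1) (row_word n T)) = card (U \<inter> {1..r - 1})" if "r \<le> 2*n"
    using that by (simp add: word take_indicator_word ups_indicator_word)
  show ?thesis
  proof
    assume r: "T 1 i = r"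
    then have "r \<in> {1..2*n}" using syt_entry_range[OF T, of 1 i] i by (auto simp: cells_def)
    moreover have "r \<in> U" using r i by (auto simp: U_def)
    moreover have "card (U \<inter> {1..r - 1}) = i - 1"
      using card_first_row_below[OF T i] r by (simp add: U_def)
    ultimately show "r \<in> {1..2*n} \<and> row_word n T ! (r - 1) \<and> ups (take (r - 1) (row_word n T)) = i - 1"
      using nth_indicator_word[of r "2*n" U] ups_prefix by (simp add: word)
  next
    assume r: "r \<in> {1..2*n} \<and> row_word n T ! (r - 1) \<and> ups (take (r - 1) (row_word n T)) = i - 1"
    then have "r \<in> U" "card (U \<inter> {1..r - 1}) = i - 1"
      using nth_indicator_word[of r "2*n" U] ups_prefix by (simp_all add: word)
    then obtain b where b: "b \<in> {1..n}" "r = T 1 b" by (auto simp: U_def)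
    then have "b = i"
      using card_first_row_below[OF T b(1)] \<open>card (U \<inter> {1..r - 1}) = i - 1\<close> i by (auto simp: U_def)
    then show "T 1 i = r" using b by simp
  qed
qed

lemma syt_first_row_entry_range:
  assumes T: "is_syt n T" and i: "i \<in> {1..n}"
  shows "T 1 i \<in> {i..2*i - 1}"
proof -
  define r where "r = T 1 i"
  define v where "v = take (r - 1) (row_word n T)"
  have r: "r \<in> {1..2*n}" "row_word n T ! (r - 1)" "ups v = i - 1"
    using syt_first_row_entry_eq_iff[OF T i, of r] by (simp_all add: r_def v_def)
  have w: "row_word n T \<in> ballot_words 0 n n" by (rule row_word_in_ballot_words[OF T])
  then have "length (row_word n T) = 2*n" by (simp add: length_ballot_words)
  then have "downs v \<le> ups v" "ups v + downs v = r - 1"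
    using w r(1) ups_add_downs[of v] by (auto simp: ballot_words_def ballot_iff_prefixes v_def)
  then show ?thesis using r i by (auto simp: r_def)
qed

definition marked_words :: "nat \<Rightarrow> nat \<Rightarrow> nat \<Rightarrow> bool list set" where
  "marked_words n i r =
     {w \<in> ballot_words 0 n n. r \<in> {1..2*n} \<and> w ! (r - 1) \<and> ups (take (r - 1) w) = i - 1}"

lemma card_syt_first_row_entry_eq:
  assumes i: "i \<in> {1..n}"
  shows "card {T \<in> syt n. T 1 i = r} = card (marked_words n i r)"
proof -
  have "{T \<in> syt n. T 1 i = r} = {T \<in> syt n. row_word n T \<in> marked_words n i r}"
    using syt_first_row_entry_eq_iff[OF _ i] row_word_in_ballot_words
    by (auto simp: syt_def marked_words_def)
  moreover have "bij_betw (row_word n) {T \<in> syt n. row_word n T \<in> marked_words n i r} (marked_words n i r)"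
  proof (rule bij_betw_subset[OF bij_row_word])
    show "row_word n ` {T \<in> syt n. row_word n T \<in> marked_words n i r} = marked_words n i r"
      using bij_betw_imp_surj_on[OF bij_row_word, of n] by (auto simp: marked_words_def)
  qed auto
  ultimately show ?thesis by (simp add: bij_betw_same_card)
qed

lemma marked_words_eq_image:
  assumes i: "1 \<le> i" "i \<le> r" "r \<le> 2*i - 1" "2*i \<le> n"
  shows "marked_words n i r
    = (\<lambda>(u, v). u @ True # v) ` (ballot_words 0 (i - 1) (r - i) \<times> ballot_words (2*i - r) (n - i) (n - r + i))"
proof (intro set_eqI iffI)
  fix w assume w: "w \<in> marked_words n i r"
  define u where "u = take (r - 1) w"
  define v where "v = drop r w"
  have "length w = 2*n" using w length_ballot_words by (fastforce simp: marked_words_def)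
  then have w_split: "w = u @ True # v" and length_u: "length u = r - 1"
    using id_take_nth_drop[of "r - 1" w] w i by (auto simp: u_def v_def marked_words_def)
  have u: "ups u = i - 1" "downs u = r - i"
    using w ups_add_downs[of u] length_u i by (auto simp: u_def marked_words_def)
  have height: "Suc (0 + ups u - downs u) = 2*i - r" using u i by simp
  have "ups w = n" "downs w = n" "ballot 0 w" using w by (auto simp: ballot_words_def marked_words_def)
  then have "ballot 0 u" "ballot (Suc (0 + ups u - downs u)) v" "ups v = n - i" "downs v = n - r + i"
    using u i unfolding w_split ballot_append by simp_all
  then have "ballot 0 u" "ballot (2*i - r) v" "ups v = n - i" "downs v = n - r + i"
    unfolding height by simp_all
  then show "w \<in> (\<lambda>(u, v). u @ True # v) ` (ballot_words 0 (i - 1) (r - i) \<times> ballot_words (2*i - r) (n - i) (n - r + i))"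
    using u w_split by (auto simp: ballot_words_def intro!: image_eqI[of _ _ "(u, v)"])
next
  fix w assume "w \<in> (\<lambda>(u, v). u @ True # v) ` (ballot_words 0 (i - 1) (r - i) \<times> ballot_words (2*i - r) (n - i) (n - r + i))"
  then obtain u v where u: "ups u = i - 1" "downs u = r - i" "ballot 0 u"
    and v: "ups v = n - i" "downs v = n - r + i" "ballot (2*i - r) v" and w: "w = u @ True # v"
    by (auto simp: ballot_words_def)
  have "length u = r - 1" using ups_add_downs[of u] u i by simp
  then have "w ! (r - 1)" "take (r - 1) w = u" unfolding w by (metis nth_append_length, simp)
  moreover have height: "Suc (0 + ups u - downs u) = 2*i - r" using u i by simp
  have "ballot 0 w" using u v unfolding w ballot_append ballot.simps height by simp
  ultimately show "w \<in> marked_words n i r"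
    using u v i w by (auto simp: marked_words_def ballot_words_def)
qed

lemma card_syt_first_row_entry:
  assumes i: "1 \<le> i" "i \<le> r" "r \<le> 2*i - 1" "2*i \<le> n"
  shows "card {T \<in> syt n. T 1 i = r}
    = card (ballot_words 0 (i - 1) (r - i)) * card (ballot_words (2*i - r) (n - i) (n - r + i))"
proof -
  have "inj_on (\<lambda>(u, v). u @ True # v) (ballot_words 0 (i - 1) (r - i) \<times> ballot_words (2*i - r) (n - i) (n - r + i))"
    using length_ballot_words by (fastforce intro: inj_onI)
  then show ?thesis
    using card_syt_first_row_entry_eq[of i n r] i
    by (simp add: marked_words_eq_image[OF i] card_image card_cartesian_product)
qed

lemma sum_card_syt_first_row_entry:
  assumes i: "i \<in> {1..n}"
  shows "(\<Sum>r\<in>{i..2*i - 1}. card {T \<in> syt n. T 1 i = r}) = card (syt n)"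
proof -
  have "finite (syt n)" using bij_betw_finite[OF bij_row_word] finite_ballot_words by blast
  then have "(\<Sum>r\<in>{i..2*i - 1}. card {T \<in> syt n. T 1 i = r})
      = card (\<Union>r\<in>{i..2*i - 1}. {T \<in> syt n. T 1 i = r})"
    by (intro card_UN_disjoint[symmetric]) auto
  also have "\<dots> = card (syt n)"
    using syt_first_row_entry_range[OF _ i] by (intro arg_cong[where f=card]) (auto simp: syt_def)
  finally show ?thesis .
qed

section \<open>The limit distribution\<close>

definition falling_fact :: "nat \<Rightarrow> nat \<Rightarrow> real" where
  "falling_fact k N = (\<Prod>j<k. real N - real j)"

lemma fact_eq_falling_fact: "k \<le> N \<Longrightarrow> (fact N :: real) = fact (N - k) * falling_fact k N"
proof (induction k)
  case 0
  then show ?case by (simp add: falling_fact_def)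
next
  case (Suc k)
  have "N - k = Suc (N - Suc k)" using Suc.prems by simp
  then have "(fact (N - k) :: real) = (real N - real k) * fact (N - Suc k)"
    using Suc.prems by (simp add: of_nat_diff)
  then show ?case using Suc by (simp add: falling_fact_def)
qed

lemma falling_fact_pos: "k \<le> N \<Longrightarrow> falling_fact k N > 0"
  unfolding falling_fact_def by (intro prod_pos) auto

lemma falling_fact_asymp:
  assumes "filterlim f at_top F"
  shows "((\<lambda>x. falling_fact k (f x) / real (f x) ^ k) \<longlongrightarrow> 1) F"
proof -
  have "(\<lambda>N. \<Prod>j<k. 1 - real j / real N) \<longlonglongrightarrow> (\<Prod>j<k. 1 - 0)"
    by (intro tendsto_prod tendsto_diff tendsto_const lim_const_over_n)
  moreover have "\<forall>\<^sub>F N in sequentially. (\<Prod>j<k. 1 - real j / real N) = falling_fact k N / real N ^ k"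
    using eventually_gt_at_top[of 0]
  proof eventually_elim
    case (elim N)
    have "(\<Prod>j<k. 1 - real j / real N) = (\<Prod>j<k. (real N - real j) / real N)"
      using elim by (intro prod.cong) (auto simp: field_simps)
    then show ?case by (simp add: prod_dividef falling_fact_def)
  qed
  ultimately have "(\<lambda>N. falling_fact k N / real N ^ k) \<longlonglongrightarrow> 1"
    by (simp add: tendsto_cong)
  then show ?thesis using filterlim_compose[OF _ assms] by blast
qed

lemma syt_prob_eq:
  assumes i: "1 \<le> i" "i \<le> r" "r \<le> 2*i - 1" "2*i \<le> n"
  shows "syt_prob n i r = real (card (ballot_words 0 (i - 1) (r - i))) * (real (2*i - r) + 1)
    * (falling_fact i n * falling_fact (r - i) (n + 1) / falling_fact r (2*n))"
proof -
  define c where "c = real (card (ballot_words 0 (i - 1) (r - i)))"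
  define h where "h = 2*i - r"
  define a where "a = n - i"
  have "1 \<le> a" using i by (simp add: a_def)
  have heights: "n - r + i = a + h" "2*a + h = 2*n - r" "a + h + 1 = n - r + i + 1"
    using i by (simp_all add: a_def h_def)
  have "card {T \<in> syt n. T 1 i = r} = card (ballot_words 0 (i - 1) (r - i)) * card (ballot_words h a (a + h))"
    using card_syt_first_row_entry[OF i] unfolding h_def[symmetric] a_def[symmetric] heights(1) .
  moreover have "real (card (ballot_words h a (a + h)))
      = (real h + 1) * fact (2*n - r) / (fact (n - i) * fact (n - r + i + 1))"
    using card_ballot_words_tight[OF \<open>1 \<le> a\<close>, of h] by (simp only: heights(2,3)) (simp add: a_def)
  ultimately have numerator: "real (card {T \<in> syt n. T 1 i = r})
      = c * ((real h + 1) * fact (2*n - r) / (fact (n - i) * fact (n - r + i + 1)))"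
    by (simp add: c_def)
  have denominator: "real (card (syt n)) = fact (2*n) / (fact n * fact (n + 1))"
    using card_ballot_words_tight[of n 0] i by (simp add: card_syt)
  have "(fact (2*n) :: real) = fact (2*n - r) * falling_fact r (2*n)"
    "(fact n :: real) = fact (n - i) * falling_fact i n"
    using fact_eq_falling_fact[of r "2*n"] fact_eq_falling_fact[of i n] i by simp_all
  moreover have "(fact (n + 1) :: real) = fact (n - r + i + 1) * falling_fact (r - i) (n + 1)"
    using fact_eq_falling_fact[of "r - i" "n + 1"] i by (simp add: Suc_diff_le)
  moreover have "falling_fact r (2*n) > 0" "falling_fact i n > 0" "falling_fact (r - i) (n + 1) > 0"
    using i by (simp_all add: falling_fact_pos)
  moreover have "(c * (H * F1 / (Fa * Fb))) / (F1 * P / (Fa * P1 * (Fb * P2))) = c * (H * P1 * P2 / P)"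
    if "F1 > 0" "Fa > 0" "Fb > 0" "P > 0" "P1 > 0" "P2 > 0" for c H F1 Fa Fb P P1 P2 :: real
    using that by (simp add: field_simps)
  ultimately show ?thesis
    unfolding syt_prob_def numerator denominator by (simp add: c_def h_def)
qed

lemma power_ratio_tendsto:
  "(\<lambda>n. real n ^ i * real (n + 1) ^ s / real (2*n) ^ (i + s)) \<longlonglongrightarrow> (1/2)^(i + s)"
proof -
  have "(\<lambda>n. real (n + 1) / real n) \<longlonglongrightarrow> 1" by real_asymp
  then have "(\<lambda>n. (1/2)^(i + s) * (real (n + 1) / real n)^s) \<longlonglongrightarrow> (1/2)^(i + s) * 1^s"
    by (intro tendsto_intros)
  moreover have "\<forall>\<^sub>F n in sequentially. (1/2)^(i + s) * (real (n + 1) / real n)^s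
      = real n ^ i * real (n + 1) ^ s / real (2*n) ^ (i + s)"
    using eventually_gt_at_top[of 0]
    by eventually_elim (simp add: power_add power_mult_distrib power_divide field_simps)
  ultimately show ?thesis by (simp add: tendsto_cong)
qed

lemma falling_fact_ratio_tendsto:
  assumes "i \<le> r"
  shows "(\<lambda>n. falling_fact i n * falling_fact (r - i) (n + 1) / falling_fact r (2*n)) \<longlonglongrightarrow> (1/2)^r"
proof -
  define s where "s = r - i"
  have r: "i + s = r" using assms by (simp add: s_def)
  have "filterlim (\<lambda>n::nat. n + 1) at_top sequentially" "filterlim (\<lambda>n::nat. 2*n) at_top sequentially"
    by real_asymp+
  then have "(\<lambda>n. (falling_fact i n / real n ^ i) * (falling_fact s (n + 1) / real (n + 1) ^ s)
        / (falling_fact r (2*n) / real (2*n) ^ r) * (real n ^ i * real (n + 1) ^ s / real (2*n) ^ r))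
      \<longlonglongrightarrow> 1 * 1 / 1 * (1/2)^r"
    using power_ratio_tendsto[of i s, unfolded r]
    by (intro tendsto_mult tendsto_divide falling_fact_asymp filterlim_ident) simp_all
  moreover have "\<forall>\<^sub>F n in sequentially.
      (falling_fact i n / real n ^ i) * (falling_fact s (n + 1) / real (n + 1) ^ s)
        / (falling_fact r (2*n) / real (2*n) ^ r) * (real n ^ i * real (n + 1) ^ s / real (2*n) ^ r)
      = falling_fact i n * falling_fact s (n + 1) / falling_fact r (2*n)"
    using eventually_ge_at_top[of "r + 1"]
  proof eventually_elim
    case (elim n)
    have "A * B / C = (A / a) * (B / b) / (C / c) * (a * b / c)"
      if "a > 0" "b > 0" "c > 0" "C > 0" for A B C a b c :: real
      using that by (simp add: field_simps)
    then show ?case using elim falling_fact_pos[of r "2*n"] by simp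
  qed
  ultimately show ?thesis by (simp add: tendsto_cong s_def)
qed

lemma syt_prob_tendsto:
  assumes "1 \<le> i" "i \<le> r" "r \<le> 2*i - 1"
  shows "(\<lambda>n. syt_prob n i r)
    \<longlonglongrightarrow> real (card (ballot_words 0 (i - 1) (r - i))) * (real (2*i - r) + 1) * (1/2)^r"
proof (rule Lim_transform_eventually)
  show "(\<lambda>n. real (card (ballot_words 0 (i - 1) (r - i))) * (real (2*i - r) + 1)
        * (falling_fact i n * falling_fact (r - i) (n + 1) / falling_fact r (2*n)))
      \<longlonglongrightarrow> real (card (ballot_words 0 (i - 1) (r - i))) * (real (2*i - r) + 1) * (1/2)^r"
    by (intro tendsto_mult_left falling_fact_ratio_tendsto assms)
  show "\<forall>\<^sub>F n in sequentially. real (card (ballot_words 0 (i - 1) (r - i))) * (real (2*i - r) + 1)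
        * (falling_fact i n * falling_fact (r - i) (n + 1) / falling_fact r (2*n)) = syt_prob n i r"
    using eventually_ge_at_top[of "2*i"] by eventually_elim (rule syt_prob_eq[OF assms, symmetric])
qed

lemma syt_prob_convergent:
  assumes "1 \<le> i"
  shows "convergent (\<lambda>n. syt_prob n i r)"
proof (cases "r \<in> {i..2*i - 1}")
  case True
  then show ?thesis using syt_prob_tendsto[of i r] assms by (auto intro: convergentI)
next
  case False
  have "\<forall>\<^sub>F n in sequentially. 0 = syt_prob n i r"
    using eventually_ge_at_top[of i]
  proof eventually_elim
    case (elim n)
    have no_tableaux: "{T \<in> syt n. T 1 i = r} = {}"
      using syt_first_row_entry_range[of n _ i] assms elim False by (auto simp: syt_def)
    show ?case unfolding syt_prob_def no_tableaux by simp
  qed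
  then show ?thesis by (rule convergentI[OF Lim_transform_eventually[OF tendsto_const]])
qed

definition binom_half :: "nat \<Rightarrow> nat \<Rightarrow> real" where
  "binom_half i k = fact (i + k) / (fact k * fact i) * (1/2)^k"

definition limit_weight :: "nat \<Rightarrow> nat \<Rightarrow> real" where
  "limit_weight i k = (real i - real k) * (real i + 1 - real k) / (real i + real k) * binom_half i k"

lemma p_lim_eq:
  assumes "1 \<le> i" "k < i"
  shows "p_lim i (i + k) = limit_weight i k * (1/2)^i"
proof -
  have "p_lim i (i + k) = real (card (ballot_words 0 (i - 1) k)) * (real (2*i - (i + k)) + 1) * (1/2)^(i + k)"
    unfolding p_lim_def using limI[OF syt_prob_tendsto[of i "i + k"]] assms by simp
  also have "\<dots> = limit_weight i k * (1/2)^i"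
  proof -
    have "real (2*i - (i + k)) = real i - real k" using assms by (simp add: of_nat_diff)
    then show ?thesis
      unfolding card_ballot_words_from_zero[OF assms] limit_weight_def binom_half_def
      using assms by (simp add: power_add field_simps)
  qed
  finally show ?thesis .
qed

lemma sum_interval_shift:
  fixes f :: "nat \<Rightarrow> 'a::comm_monoid_add"
  assumes "1 \<le> i"
  shows "(\<Sum>r\<in>{i..2*i - 1}. f r) = (\<Sum>k<i. f (i + k))"
proof -
  have "{i..2*i - 1} = (\<lambda>k. i + k) ` {..<i}"
  proof (intro set_eqI iffI)
    fix r assume "r \<in> {i..2*i - 1}"
    then have "r = i + (r - i)" "r - i < i" using assms by auto
    then show "r \<in> (\<lambda>k. i + k) ` {..<i}" by blast
  qed (use assms in auto)
  then show ?thesis by (simp add: sum.reindex)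
qed

lemma sum_p_lim:
  assumes "1 \<le> i"
  shows "(\<Sum>r\<in>{i..2*i - 1}. p_lim i r) = 1"
proof (rule LIMSEQ_unique)
  show "(\<lambda>n. \<Sum>r\<in>{i..2*i - 1}. syt_prob n i r) \<longlonglongrightarrow> (\<Sum>r\<in>{i..2*i - 1}. p_lim i r)"
    using syt_prob_convergent assms by (intro tendsto_sum) (simp add: p_lim_def convergent_LIMSEQ_iff)
  have "\<forall>\<^sub>F n in sequentially. 1 = (\<Sum>r\<in>{i..2*i - 1}. syt_prob n i r)"
    using eventually_ge_at_top[of "2*i"]
  proof eventually_elim
    case (elim n)
    have "real (card (syt n)) > 0"
      using card_ballot_words_tight[of n 0] elim assms by (simp add: card_syt)
    then show ?case
      using sum_card_syt_first_row_entry[of i n] elim assms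
      by (simp add: syt_prob_def flip: sum_divide_distrib of_nat_sum)
  qed
  then show "(\<lambda>n. \<Sum>r\<in>{i..2*i - 1}. syt_prob n i r) \<longlonglongrightarrow> 1"
    by (rule Lim_transform_eventually[OF tendsto_const])
qed

lemma sum_p_lim_shifted: "1 \<le> i \<Longrightarrow> (\<Sum>k<i. p_lim i (i + k)) = 1"
  using sum_p_lim sum_interval_shift[of i "p_lim i"] by simp

section \<open>Moments of the limit distribution\<close>

lemma binom_half_Suc: "binom_half i (Suc k) = binom_half i k * (real i + real k + 1) / (2 * (real k + 1))"
proof -
  have "fact (i + Suc k) = (real i + real k + 1) * (fact (i + k) :: real)"
    "fact (Suc k) = (real k + 1) * (fact k :: real)"
    by (simp_all add: algebra_simps)
  then show ?thesis by (simp add: binom_half_def field_simps)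
qed

lemma limit_weight_Suc:
  "limit_weight i (Suc k) = (real i - real k - 1) * (real i - real k) / (2 * (real k + 1)) * binom_half i k"
proof -
  have cancel: "x / d * (h * d / e) = x / e * h" if "d \<noteq> 0" for x d h e :: real
    using that by (simp add: field_simps)
  have "limit_weight i (Suc k) = (real i - (real k + 1)) * (real i + 1 - (real k + 1)) / (real i + (real k + 1))
      * (binom_half i k * (real i + (real k + 1)) / (2 * (real k + 1)))"
    unfolding limit_weight_def binom_half_Suc of_nat_Suc add.assoc by (simp only: add.commute)
  also have "\<dots> = (real i - (real k + 1)) * (real i + 1 - (real k + 1)) / (2 * (real k + 1)) * binom_half i k"
    by (rule cancel) linarith
  finally show ?thesis by (simp add: algebra_simps)
qed

text \<open>The partial sums below are of Gosper type: a polynomial \<open>R k\<close> times \<open>binom_half i k\<close>.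
  Since the ratio of consecutive terms is rational in \<open>k\<close>, the induction step reduces to the
  polynomial identity assumed here.\<close>

lemma sum_limit_weight_step:
  assumes "2 * (real k + 1) * R k + q (Suc k) * (real i - real k - 1) * (real i - real k)
      = (real i + real k + 1) * R (Suc k)"
  shows "R k * binom_half i k + q (Suc k) * limit_weight i (Suc k) = R (Suc k) * binom_half i (Suc k)"
proof -
  have "R k * binom_half i k + q (Suc k) * limit_weight i (Suc k)
      = binom_half i k * (2 * (real k + 1) * R k + q (Suc k) * (real i - real k - 1) * (real i - real k))
        / (2 * (real k + 1))"
    unfolding limit_weight_Suc by (simp add: field_simps)
  also have "\<dots> = R (Suc k) * binom_half i (Suc k)"
    unfolding assms binom_half_Suc by (simp add: field_simps)
  finally show ?thesis .
qed

lemma limit_weight_0: "1 \<le> i \<Longrightarrow> limit_weight i 0 = real i + 1"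
  by (simp add: limit_weight_def binom_half_def)

lemma sum_limit_weight_linear:
  assumes "1 \<le> i"
  shows "(\<Sum>k\<le>K. (real k - (real i + 2)) * limit_weight i k)
    = (- (real i + 1) * (real i + 2) + (2 * real i - 1) * real K - real K ^ 2) * binom_half i K"
proof (induction K)
  case 0
  then show ?case using assms by (simp add: limit_weight_0 binom_half_def algebra_simps)
next
  case (Suc K)
  then show ?case
    using sum_limit_weight_step[where k = K and i = i and q = "\<lambda>k. real k - (real i + 2)"
      and R = "\<lambda>K. - (real i + 1) * (real i + 2) + (2 * real i - 1) * real K - real K ^ 2"]
    by (simp add: algebra_simps power2_eq_square)
qed

lemma sum_limit_weight_quadratic:
  assumes "1 \<le> i"
  shows "(\<Sum>k\<le>K. (real k ^ 2 - (real i ^ 2 + 10 * real i + 10)) * limit_weight i k)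
    = (- (real i + 1) * (real i ^ 2 + 10 * real i + 10) + (real i ^ 2 + 8 * real i - 4) * real K
       + (real i - 5) * real K ^ 2 - real K ^ 3) * binom_half i K"
proof (induction K)
  case 0
  then show ?case using assms by (simp add: limit_weight_0 binom_half_def algebra_simps power2_eq_square)
next
  case (Suc K)
  then show ?case
    using sum_limit_weight_step[where k = K and i = i
      and q = "\<lambda>k. real k ^ 2 - (real i ^ 2 + 10 * real i + 10)"
      and R = "\<lambda>K. - (real i + 1) * (real i ^ 2 + 10 * real i + 10) + (real i ^ 2 + 8 * real i - 4) * real K
       + (real i - 5) * real K ^ 2 - real K ^ 3"]
    by (simp add: algebra_simps power2_eq_square power3_eq_cube)
qed

definition central_term :: "nat \<Rightarrow> real" where
  "central_term i = 2 * (1/4)^i * fact (2*i + 1) / (fact i)^2"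

lemma central_term_eq_binom_half:
  assumes "i = Suc j"
  shows "central_term i = 2 * (2 * real i + 1) * (binom_half i j * (1/2)^i)"
proof -
  have fact_odd: "(fact (2*i + 1) :: real) = (2 * real j + 3) * (2 * real j + 2) * fact (2*j + 1)"
  proof -
    have "2*i + 1 = Suc (Suc (2*j + 1))" using assms by simp
    then show ?thesis by (simp add: algebra_simps)
  qed
  have fact_i: "(fact i :: real) = (real j + 1) * fact j" using assms by simp
  have quarter: "(1/4::real)^i = (1/2)^j * (1/2)^i * (1/2)"
  proof -
    have "(1/4::real)^i = (1/2)^(2*i)" by (simp add: power_mult power2_eq_square)
    then show ?thesis using assms by (simp add: power_add mult_2)
  qed
  have rearrange: "2 * a * (F / (Fj * Fi) * P * Q) = 2 * (P * Q * (1/2)) * (a * (2 * J) * F) / (Fi * (J * Fj))"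
    if "J > 0" "Fj > 0" "Fi > 0" for a F Fj Fi P Q J :: real
    using that by (simp add: field_simps)
  have sum_ij: "i + j = 2*j + 1" and "2 * real i + 1 = 2 * real j + 3" "2 * real j + 2 = 2 * (real j + 1)"
    using assms by simp_all
  have "2 * (2 * real i + 1) * (binom_half i j * (1/2)^i)
      = 2 * ((1/2)^j * (1/2)^i * (1/2)) * ((2 * real i + 1) * (2 * (real j + 1)) * fact (2*j + 1))
        / (fact i * ((real j + 1) * fact j))"
    unfolding binom_half_def sum_ij by (rule rearrange) auto
  also have "\<dots> = central_term i"
    unfolding central_term_def quarter fact_odd fact_i \<open>2 * real i + 1 = 2 * real j + 3\<close>
      \<open>2 * real j + 2 = 2 * (real j + 1)\<close> power2_eq_square by (simp add: mult.assoc)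
  finally show ?thesis ..
qed

lemma central_term_squared: "central_term i ^ 2 = 4 * (1/16)^i * (fact (2*i + 1))^2 / (fact i)^4"
proof -
  have "((1/4::real)^i)^2 = (1/16)^i"
    by (simp add: power2_eq_square flip: power_mult_distrib)
  moreover have "((fact i :: real)^2)^2 = (fact i)^4" by (simp flip: power_mult)
  ultimately show ?thesis by (simp add: central_term_def power_divide power_mult_distrib)
qed

lemma p_lim_first_moment:
  assumes "1 \<le> i"
  shows "(\<Sum>k<i. real k * p_lim i (i + k)) = real i + 2 - central_term i"
proof -
  obtain j where j: "i = Suc j" using assms by (cases i) auto
  have "(\<Sum>k<i. (real k - (real i + 2)) * p_lim i (i + k))
      = (\<Sum>k\<le>j. (real k - (real i + 2)) * limit_weight i k) * (1/2)^i"
    using p_lim_eq[OF assms] j by (simp add: lessThan_Suc_atMost sum_distrib_right mult.assoc)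
  also have "\<dots> = - central_term i"
  proof -
    have "real i = real j + 1" using j by simp
    then show ?thesis
      unfolding sum_limit_weight_linear[OF assms] central_term_eq_binom_half[OF j]
      by (simp add: algebra_simps power2_eq_square)
  qed
  moreover have "(\<Sum>k<i. (real k - (real i + 2)) * p_lim i (i + k))
      = (\<Sum>k<i. real k * p_lim i (i + k)) - (real i + 2) * (\<Sum>k<i. p_lim i (i + k))"
    by (simp add: left_diff_distrib sum_subtractf sum_distrib_left)
  ultimately show ?thesis using sum_p_lim_shifted[OF assms] by simp
qed

lemma p_lim_second_moment:
  assumes "1 \<le> i"
  shows "(\<Sum>k<i. real k ^ 2 * p_lim i (i + k))
    = real i ^ 2 + 10 * real i + 10 - (2 * real i + 5) * central_term i"
proof -
  obtain j where j: "i = Suc j" using assms by (cases i) auto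
  have "(\<Sum>k<i. (real k ^ 2 - (real i ^ 2 + 10 * real i + 10)) * p_lim i (i + k))
      = (\<Sum>k\<le>j. (real k ^ 2 - (real i ^ 2 + 10 * real i + 10)) * limit_weight i k) * (1/2)^i"
    using p_lim_eq[OF assms] j by (simp add: lessThan_Suc_atMost sum_distrib_right mult.assoc)
  also have "\<dots> = - (2 * real i + 5) * central_term i"
  proof -
    have "real i = real j + 1" using j by simp
    then show ?thesis
      unfolding sum_limit_weight_quadratic[OF assms] central_term_eq_binom_half[OF j]
      by (simp add: algebra_simps power2_eq_square power3_eq_cube)
  qed
  moreover have "(\<Sum>k<i. (real k ^ 2 - (real i ^ 2 + 10 * real i + 10)) * p_lim i (i + k))
      = (\<Sum>k<i. real k ^ 2 * p_lim i (i + k)) - (real i ^ 2 + 10 * real i + 10) * (\<Sum>k<i. p_lim i (i + k))"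
    by (simp add: left_diff_distrib sum_subtractf sum_distrib_left)
  ultimately show ?thesis using sum_p_lim_shifted[OF assms] by (simp add: algebra_simps)
qed

lemma dist_variance_shift:
  assumes "(\<Sum>r\<in>S. p r) = 1"
  shows "dist_variance p S = (\<Sum>r\<in>S. (real r - c)^2 * p r) - (\<Sum>r\<in>S. (real r - c) * p r)^2"
proof -
  define m where "m = dist_mean p S"
  have first: "(\<Sum>r\<in>S. (real r - c) * p r) = m - c"
    using assms by (simp add: m_def dist_mean_def left_diff_distrib sum_subtractf flip: sum_distrib_left)
  have "dist_variance p S
      = (\<Sum>r\<in>S. (real r - c)^2 * p r - 2 * (m - c) * ((real r - c) * p r) + (m - c)^2 * p r)"
    unfolding dist_variance_def m_def[symmetric] by (intro sum.cong) (simp_all add: power2_eq_square algebra_simps)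
  also have "\<dots> = (\<Sum>r\<in>S. (real r - c)^2 * p r) - (m - c)^2"
    using assms first by (simp add: sum.distrib sum_subtractf power2_eq_square flip: sum_distrib_left)
  finally show ?thesis using first by simp
qed

theorem mainTheorem4:
  fixes i :: nat
  assumes "1 \<le> i"
  shows "(\<forall>r. convergent (\<lambda>n. syt_prob n i r))
    \<and> dist_variance (p_lim i) {i..2*i-1}
        = - (4 * (1/16)^i * (fact (2*i+1))^2 / (fact i)^4)
          - (2 * (1/4)^i * fact (2*i+1) / (fact i)^2)
          + 6 * real i + 6"
proof
  show "\<forall>r. convergent (\<lambda>n. syt_prob n i r)"
    using syt_prob_convergent[OF assms] by blast
  have "dist_variance (p_lim i) {i..2*i-1}
      = (\<Sum>k<i. real k ^ 2 * p_lim i (i + k)) - (\<Sum>k<i. real k * p_lim i (i + k))^2"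
    using dist_variance_shift[OF sum_p_lim[OF assms], of "real i"]
    unfolding sum_interval_shift[OF assms] by simp
  also have "\<dots> = 6 * real i + 6 - central_term i - central_term i ^ 2"
    unfolding p_lim_first_moment[OF assms] p_lim_second_moment[OF assms]
    by (simp add: algebra_simps power2_eq_square)
  finally show "dist_variance (p_lim i) {i..2*i-1}
        = - (4 * (1/16)^i * (fact (2*i+1))^2 / (fact i)^4)
          - (2 * (1/4)^i * fact (2*i+1) / (fact i)^2)
          + 6 * real i + 6"
    unfolding central_term_squared by (simp add: central_term_def)
qed

end
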